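(* Let $1\le k\le d$ be integers, let $(p_m)_{m\in\mathbb Z}$ be the sequence defined below, and let $a,b,\mu$ be integers with $k+a\ge0$. Then $$\sum_{m=-\infty}^{\mu}p_{\mu-m}\binom{d+a}{m+b}=\sum_{m=-b}^{\mu}(d-k)^{\mu-m}\binom{k+a}{m+b}$$ (both sums have finitely many nonzero terms; an empty sum is $0$).
   Context: Sequence: $p_m=0$ for $m<0$, $p_0=1$, and $p_m=\sum_{\ell=1}^{m}(\ell-1)\binom{d-k+1}{\ell}p_{m-\ell}$ for $m\ge1$. Conventions: $0^0=1$; for integers $N\ge0$, $\binom{N}{r}$ is the usual binomial coefficient for $0\le r\le N$ and $0$ for $r<0$ or $r>N$. *)

theory Defs
  imports Main
begin

definition binomZ :: "int \<Rightarrow> int \<Rightarrow> int" where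
  "binomZ N r = (if 0 \<le> r \<and> r \<le> N then int (nat N choose nat r) else 0)"

function pseq :: "nat \<Rightarrow> nat \<Rightarrow> int \<Rightarrow> int" where
  "pseq d k m = (if m < 0 then 0 else if m = 0 then 1 else
     (\<Sum>l\<in>{1..m}. (l - 1) * binomZ (int d - int k + 1) l * pseq d k (m - l)))"
  by pat_completeness auto
termination
  by (relation "measure (\<lambda>(d, k, m). nat m)") auto

declare pseq.simps [simp del]

end

theory Submission
  imports Defs "HOL-Computational_Algebra.Formal_Power_Series"
begin

unbundle fps_syntax

text \<open>With \<open>n = d - k\<close> and \<open>P(x) = \<Sum>\<^sub>m p\<^sub>m x\<^sup>m\<close>, the recurrence for \<open>p\<^sub>m\<close> says exactly
  \<open>A(x) P(x) = 1\<close> for \<open>A(x) = (1+x)\<^sup>n\<^sup>+\<^sup>1 - (n+1) x (1+x)\<^sup>n = (1+x)\<^sup>n (1 - n x)\<close>, since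
  \<open>(l-1) binom(n+1, l) = binom(n+1, l) - (n+1) binom(n, l-1)\<close>. Hence \<open>P(x) (1+x)\<^sup>n = 1/(1 - n x)\<close>,
  and with \<open>e = k + a\<close> both sides of the identity are the coefficient of \<open>x\<^sup>\<mu>\<^sup>+\<^sup>b\<close> in
  \<open>(1+x)\<^sup>e\<^sup>+\<^sup>n P(x) = (1+x)\<^sup>e / (1 - n x)\<close>.\<close>

lemma fps_one_plus_X_power_nth:
  "((1 + fps_X :: 'a::comm_semiring_1 fps) ^ n) $ i = of_nat (n choose i)"
proof (induction n arbitrary: i)
  case 0
  then show ?case by (cases i) auto
next
  case (Suc n)
  have "(1 + fps_X :: 'a fps) ^ Suc n = (1 + fps_X) ^ n + fps_X * (1 + fps_X) ^ n"
    by (simp add: algebra_simps)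
  then show ?case using Suc by (cases i) (auto simp: add.commute)
qed

lemma fps_one_plus_X_power:
  "(1 + fps_X :: 'a::comm_semiring_1 fps) ^ n = Abs_fps (\<lambda>i. of_nat (n choose i))"
  by (rule fps_ext) (simp add: fps_one_plus_X_power_nth)

lemma fps_geometric_mult:
  "(1 - fps_const c * fps_X) * Abs_fps (\<lambda>m. c ^ m) = (1 :: 'a::comm_ring_1 fps)"
  by (rule fps_ext) (simp add: algebra_simps fps_mult_left_const_nth power_eq_if)

lemma sum_int_interval_as_fps_mult_nth:
  fixes b \<mu> :: int
  assumes "-b \<le> \<mu>"
  shows "(\<Sum>m\<in>{-b..\<mu>}. f (nat (m + b)) * g (nat (\<mu> - m))) = (Abs_fps f * Abs_fps g) $ nat (\<mu> + b)"
proof -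
  have "(\<Sum>m\<in>{-b..\<mu>}. f (nat (m + b)) * g (nat (\<mu> - m)))
      = (\<Sum>j=0..nat (\<mu> + b). f j * g (nat (\<mu> + b) - j))"
    by (rule sum.reindex_bij_witness[of _ "\<lambda>j. int j - b" "\<lambda>m. nat (m + b)"])
      (use assms in \<open>auto simp: nat_diff_distrib [symmetric]\<close>)
  then show ?thesis by (simp add: fps_mult_nth)
qed

lemma binomZ_of_nat: "binomZ (int N) (int r) = int (N choose r)"
  by (simp add: binomZ_def binomial_eq_0)

lemma pseq_0: "pseq d k 0 = 1"
  by (subst pseq.simps) simp

lemma pseq_of_nat:
  assumes "m > 0" and "k \<le> d"
  shows "pseq d k (int m)
    = (\<Sum>l\<in>{1..m}. (int l - 1) * int (Suc (d - k) choose l) * pseq d k (int (m - l)))"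
proof -
  have "pseq d k (int m)
      = (\<Sum>l\<in>{1..int m}. (l - 1) * binomZ (int (Suc (d - k))) l * pseq d k (int m - l))"
    using assms by (subst pseq.simps) (simp add: of_nat_diff add.commute)
  also have "\<dots> = (\<Sum>l\<in>{1..m}. (int l - 1) * binomZ (int (Suc (d - k))) (int l) * pseq d k (int m - int l))"
    by (rule sum.reindex_bij_witness[of _ int nat]) auto
  also have "\<dots> = (\<Sum>l\<in>{1..m}. (int l - 1) * int (Suc (d - k) choose l) * pseq d k (int (m - l)))"
    by (rule sum.cong) (auto simp: binomZ_of_nat of_nat_diff simp del: of_nat_Suc)
  finally show ?thesis .
qed

definition pseq_fps :: "nat \<Rightarrow> nat \<Rightarrow> int fps" where
  "pseq_fps d k = Abs_fps (\<lambda>m. pseq d k (int m))"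

lemma pseq_fps_recurrence:
  assumes "k \<le> d"
  defines "n \<equiv> d - k"
  shows "((1 + fps_X) ^ Suc n - fps_const (int (Suc n)) * (fps_X * (1 + fps_X) ^ n)) * pseq_fps d k = 1"
proof -
  define A :: "int fps"
    where "A = (1 + fps_X) ^ Suc n - fps_const (int (Suc n)) * (fps_X * (1 + fps_X) ^ n)"
  define P where "P = pseq_fps d k"
  have coeff_A: "A $ l = - (int l - 1) * int (Suc n choose l)" if "l > 0" for l
  proof -
    obtain j where j: "l = Suc j" using \<open>l > 0\<close> by (cases l) auto
    have "A $ l = int (Suc n choose l) - int (Suc n) * int (n choose j)"
      by (simp add: A_def fps_one_plus_X_power_nth j del: power_Suc)
    also have "int (Suc n) * int (n choose j) = int l * int (Suc n choose l)"
      using Suc_times_binomial[of j n] j by (metis of_nat_mult)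
    finally show ?thesis by (simp add: algebra_simps)
  qed
  have "(A * P) $ m = (1 :: int fps) $ m" for m
  proof (cases "m = 0")
    case True
    then show ?thesis by (simp add: A_def P_def pseq_fps_def pseq_0 fps_one_plus_X_power_nth)
  next
    case False
    have "(A * P) $ m = A $ 0 * P $ m + (\<Sum>l=1..m. A $ l * P $ (m - l))"
      using False by (simp add: fps_mult_nth sum.atLeast_Suc_atMost)
    also have "(\<Sum>l=1..m. A $ l * P $ (m - l))
        = - (\<Sum>l\<in>{1..m}. (int l - 1) * int (Suc n choose l) * pseq d k (int (m - l)))"
      unfolding sum_negf[symmetric] by (rule sum.cong) (auto simp: coeff_A P_def pseq_fps_def algebra_simps)
    also have "\<dots> = - P $ m"
      using pseq_of_nat[of m k d] False assms by (simp add: P_def pseq_fps_def n_def)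
    finally show ?thesis
      using False by (simp add: A_def fps_one_plus_X_power_nth)
  qed
  then have "A * P = 1"
    by (rule fps_ext)
  then show ?thesis
    by (simp only: A_def P_def)
qed

lemma pseq_fps_mult_binomial:
  assumes "k \<le> d"
  shows "pseq_fps d k * (1 + fps_X) ^ (d - k) = Abs_fps (\<lambda>m. int (d - k) ^ m)"
proof -
  define n where "n = d - k"
  define Q where "Q = pseq_fps d k * (1 + fps_X) ^ n"
  define L :: "int fps" where "L = 1 - fps_const (int n) * fps_X"
  define G :: "int fps" where "G = Abs_fps (\<lambda>m. int n ^ m)"
  have "(1 + fps_X) ^ Suc n - fps_const (int (Suc n)) * (fps_X * (1 + fps_X) ^ n) = (1 + fps_X) ^ n * L"
    by (simp add: L_def algebra_simps flip: fps_const_add)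
  then have "Q * L = 1"
    using pseq_fps_recurrence[OF assms] by (simp add: Q_def n_def ac_simps)
  have "Q = Q * (L * G)"
    by (simp add: L_def G_def fps_geometric_mult)
  also have "\<dots> = G"
    using \<open>Q * L = 1\<close> by (simp add: mult.assoc [symmetric])
  finally show ?thesis
    by (simp add: Q_def G_def n_def)
qed

lemma sum_pseq_mult_binomZ:
  assumes "k \<le> d" and "-b \<le> \<mu>"
  shows "(\<Sum>m\<in>{-b..\<mu>}. pseq d k (\<mu> - m) * binomZ (int (e + (d - k))) (m + b))
    = (\<Sum>m\<in>{-b..\<mu>}. int (d - k) ^ nat (\<mu> - m) * binomZ (int e) (m + b))"
proof -
  have "(\<Sum>m\<in>{-b..\<mu>}. pseq d k (\<mu> - m) * binomZ (int (e + (d - k))) (m + b))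
      = (\<Sum>m\<in>{-b..\<mu>}. int (e + (d - k) choose nat (m + b)) * pseq d k (int (nat (\<mu> - m))))"
    by (rule sum.cong) (auto simp: binomZ_of_nat [symmetric] simp del: of_nat_add)
  also have "\<dots> = ((1 + fps_X) ^ (e + (d - k)) * pseq_fps d k) $ nat (\<mu> + b)"
    unfolding pseq_fps_def fps_one_plus_X_power
    by (rule sum_int_interval_as_fps_mult_nth
        [OF assms(2), of "\<lambda>j. int (e + (d - k) choose j)" "\<lambda>j. pseq d k (int j)"])
  also have "(1 + fps_X) ^ (e + (d - k)) * pseq_fps d k
      = (1 + fps_X) ^ e * Abs_fps (\<lambda>m. int (d - k) ^ m)"
    by (simp add: pseq_fps_mult_binomial [OF assms(1), symmetric] power_add algebra_simps)
  also have "\<dots> $ nat (\<mu> + b)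
      = (\<Sum>m\<in>{-b..\<mu>}. int (e choose nat (m + b)) * int (d - k) ^ nat (\<mu> - m))"
    unfolding fps_one_plus_X_power
    by (rule sum_int_interval_as_fps_mult_nth
        [OF assms(2), of "\<lambda>j. int (e choose j)" "\<lambda>j. int (d - k) ^ j", symmetric])
  also have "\<dots> = (\<Sum>m\<in>{-b..\<mu>}. int (d - k) ^ nat (\<mu> - m) * binomZ (int e) (m + b))"
    by (rule sum.cong) (auto simp: binomZ_of_nat [symmetric])
  finally show ?thesis .
qed

theorem lemma4:
  fixes d k :: nat and a b \<mu> :: int
  assumes "1 \<le> k" and "k \<le> d" and "int k + a \<ge> 0"
  shows "finite {m. m \<le> \<mu> \<and> pseq d k (\<mu> - m) * binomZ (int d + a) (m + b) \<noteq> 0}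
    \<and> (\<Sum>m\<in>{m. m \<le> \<mu> \<and> pseq d k (\<mu> - m) * binomZ (int d + a) (m + b) \<noteq> 0}.
          pseq d k (\<mu> - m) * binomZ (int d + a) (m + b))
      = (\<Sum>m\<in>{-b..\<mu>}. int (d - k) ^ nat (\<mu> - m) * binomZ (int k + a) (m + b))"
proof -
  define f where "f m = pseq d k (\<mu> - m) * binomZ (int d + a) (m + b)" for m
  define S where "S = {m. m \<le> \<mu> \<and> f m \<noteq> 0}"
  define e where "e = nat (int k + a)"
  have e: "int k + a = int e" "int d + a = int (e + (d - k))"
    using assms by (auto simp: e_def)
  have S_sub: "S \<subseteq> {-b..\<mu>}"
    by (auto simp: S_def f_def binomZ_def)
  have "sum f S = sum f {-b..\<mu>}"
    by (rule sum.mono_neutral_left) (use S_sub in \<open>auto simp: S_def\<close>)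
  also have "\<dots> = (\<Sum>m\<in>{-b..\<mu>}. int (d - k) ^ nat (\<mu> - m) * binomZ (int k + a) (m + b))"
    using sum_pseq_mult_binomZ[OF assms(2), of b \<mu> e] by (cases "-b \<le> \<mu>") (simp_all add: f_def e)
  finally show ?thesis
    using S_sub finite_subset by (auto simp: S_def f_def)
qed

end
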